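(* Let $0<\delta<\frac12$ and let $G$ be a subgroup of $\mathrm{Diff}_0^3(I)$ satisfying condition (a): there exists $c>0$ such that for all $g_1\ne g_2$ in $G$, $\sup_{t\in[0,1]}|\log(g_1'(t))-\log(g_2'(t))|\ge c$. Define $r_\delta(f)=\inf_{h\in G}p_\delta(h^{-1}\circ f)$ for $f\in\mathrm{Diff}_+^{1,\delta}(I)$. Then the functions $p_\delta$ and $r_\delta$ are continuous from $\mathrm{Diff}_+^{1,\delta}(I)$ (with the norm $\|\cdot\|_{1,\delta}$) to $\mathbb{R}$.
   Context: $I=[0,1]$. $\mathrm{Diff}_+^1(I)$ is the set of $C^1$ diffeomorphisms of $I$ fixing $0$ and $1$. $C_0^{1,\delta}(I)$ is the set of continuously differentiable $f:I\to\mathbb{R}$ with $f(0)=0$ and $f'$ Hölder of exponent $\delta$, normed by $\|f\|_{1,\delta}=|f'(0)|+\sup_{t_1\ne t_2}\frac{|f'(t_2)-f'(t_1)|}{|t_2-t_1|^\delta}$; $\mathrm{Diff}_+^{1,\delta}(I)=\mathrm{Diff}_+^1(I)\cap C_0^{1,\delta}(I)$ with this norm. $\mathrm{Diff}_0^3(I)$ is the set of $C^3$ diffeomorphisms $f$ of $I$ fixing $0$ and $1$ with $f'(0)=f'(1)=1$. For $f\in\mathrm{Diff}_+^{1,\delta}(I)$, $p_\delta(f)=|\log(f'(0))|+\sup_{t_1\ne t_2\in I}\frac{|\log(f'(t_2))-\log(f'(t_1))|}{|t_2-t_1|^\delta}$. *)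

theory Defs
  imports "HOL-Analysis.Analysis"
begin

text \<open>The interval I = [0,1]; all functions are real functions, only their
  values on I matter. Derivatives are one-sided at the endpoints (derivative
  within I).\<close>

abbreviation II :: "real set" where "II \<equiv> {0..1}"

definition D :: "(real \<Rightarrow> real) \<Rightarrow> real \<Rightarrow> real" where
  "D f t = vector_derivative f (at t within II)"

definition C1_on_I :: "(real \<Rightarrow> real) \<Rightarrow> bool" where
  "C1_on_I f \<longleftrightarrow> (\<forall>t\<in>II. f differentiable (at t within II)) \<and> continuous_on II (D f)"

definition C3_on_I :: "(real \<Rightarrow> real) \<Rightarrow> bool" where
  "C3_on_I f \<longleftrightarrow> C1_on_I f \<and> C1_on_I (D f) \<and> C1_on_I (D (D f))"

definition Diff1 :: "(real \<Rightarrow> real) set" where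
  "Diff1 = {f. bij_betw f II II \<and> C1_on_I f \<and> C1_on_I (inv_into II f) \<and> f 0 = 0 \<and> f 1 = 1}"

definition Diff03 :: "(real \<Rightarrow> real) set" where
  "Diff03 = {f. bij_betw f II II \<and> C3_on_I f \<and> C3_on_I (inv_into II f) \<and> f 0 = 0 \<and> f 1 = 1
               \<and> D f 0 = 1 \<and> D f 1 = 1}"

definition holder_quots :: "real \<Rightarrow> (real \<Rightarrow> real) \<Rightarrow> real set" where
  "holder_quots \<delta> u = {\<bar>u t2 - u t1\<bar> / \<bar>t2 - t1\<bar> powr \<delta> | t1 t2. t1 \<in> II \<and> t2 \<in> II \<and> t1 \<noteq> t2}"

definition C01d :: "real \<Rightarrow> (real \<Rightarrow> real) set" where
  "C01d \<delta> = {f. C1_on_I f \<and> f 0 = 0 \<and> bdd_above (holder_quots \<delta> (D f))}"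

definition norm1d :: "real \<Rightarrow> (real \<Rightarrow> real) \<Rightarrow> real" where
  "norm1d \<delta> f = \<bar>D f 0\<bar> + Sup (holder_quots \<delta> (D f))"

definition Diff1d :: "real \<Rightarrow> (real \<Rightarrow> real) set" where
  "Diff1d \<delta> = Diff1 \<inter> C01d \<delta>"

definition p_delta :: "real \<Rightarrow> (real \<Rightarrow> real) \<Rightarrow> real" where
  "p_delta \<delta> f = \<bar>ln (D f 0)\<bar> + Sup (holder_quots \<delta> (\<lambda>t. ln (D f t)))"

text \<open>G is a subgroup of Diff^3_0(I) (group law = composition on I;
  elements identified when they agree on I).\<close>
definition subgroup_Diff03 :: "(real \<Rightarrow> real) set \<Rightarrow> bool" where
  "subgroup_Diff03 G \<longleftrightarrow> G \<subseteq> Diff03 \<and> (\<exists>e\<in>G. \<forall>t\<in>II. e t = t)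
     \<and> (\<forall>g\<in>G. \<forall>h\<in>G. \<exists>k\<in>G. \<forall>t\<in>II. k t = g (h t))
     \<and> (\<forall>g\<in>G. \<exists>k\<in>G. \<forall>t\<in>II. k t = inv_into II g t)"

definition cond_a :: "(real \<Rightarrow> real) set \<Rightarrow> bool" where
  "cond_a G \<longleftrightarrow> (\<exists>c>0. \<forall>g1\<in>G. \<forall>g2\<in>G. (\<exists>t\<in>II. g1 t \<noteq> g2 t) \<longrightarrow>
      Sup ((\<lambda>t. \<bar>ln (D g1 t) - ln (D g2 t)\<bar>) ` II) \<ge> c)"

definition r_delta :: "real \<Rightarrow> (real \<Rightarrow> real) set \<Rightarrow> (real \<Rightarrow> real) \<Rightarrow> real" where
  "r_delta \<delta> G f = Inf ((\<lambda>h. p_delta \<delta> (inv_into II h \<circ> f)) ` G)"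

definition cont_1d :: "real \<Rightarrow> ((real \<Rightarrow> real) \<Rightarrow> real) \<Rightarrow> bool" where
  "cont_1d \<delta> F \<longleftrightarrow> (\<forall>f\<in>Diff1d \<delta>. \<forall>\<epsilon>>0. \<exists>\<eta>>0. \<forall>g\<in>Diff1d \<delta>.
      norm1d \<delta> (\<lambda>t. g t - f t) < \<eta> \<longrightarrow> \<bar>F g - F f\<bar> < \<epsilon>)"

end

theory Submission
  imports Defs
begin

text \<open>Write P(k, f) = p_delta(k \<circ> f). From ln D(k \<circ> f) = ln (D k) \<circ> f + ln (D f) one sees that
  f \<mapsto> P(k, f) is continuous on Diff^{1,delta}_+(I) whenever ln (D k) has a Lipschitz derivative;
  k = id gives the continuity of p_delta. As G is closed under inverses, r_delta(f) is the infimum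
  of P(k, f) over k \<in> G, hence upper semicontinuous. For lower semicontinuity: if P(k, g) is small
  and D g is bounded below, then ln (D k) has bounded value at 0 and bounded Hoelder constant. By
  condition (a), seen through a rounding of ln (D k) on a fine grid, only finitely many elements of
  G have this property up to agreement on I, and finitely many continuous functions P(k, \<cdot>) are
  controlled simultaneously.\<close>

section \<open>Hoelder bounds on I\<close>

definition holder_bound :: "real \<Rightarrow> (real \<Rightarrow> real) \<Rightarrow> real \<Rightarrow> bool" where
  "holder_bound \<delta> u K \<longleftrightarrow> (\<forall>t1\<in>II. \<forall>t2\<in>II. \<bar>u t2 - u t1\<bar> \<le> K * \<bar>t2 - t1\<bar> powr \<delta>)"

abbreviation holder_const :: "real \<Rightarrow> (real \<Rightarrow> real) \<Rightarrow> real" where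
  "holder_const \<delta> u \<equiv> Sup (holder_quots \<delta> u)"

definition holder_norm :: "real \<Rightarrow> (real \<Rightarrow> real) \<Rightarrow> real" where
  "holder_norm \<delta> u = \<bar>u 0\<bar> + holder_const \<delta> u"

lemma p_delta_eq_holder_norm: "p_delta \<delta> f = holder_norm \<delta> (\<lambda>t. ln (D f t))"
  unfolding p_delta_def holder_norm_def ..

lemma holder_quots_memI:
  "t1 \<in> II \<Longrightarrow> t2 \<in> II \<Longrightarrow> t1 \<noteq> t2 \<Longrightarrow> \<bar>u t2 - u t1\<bar> / \<bar>t2 - t1\<bar> powr \<delta> \<in> holder_quots \<delta> u"
  unfolding holder_quots_def by blast

lemma holder_quots_nonempty: "holder_quots \<delta> u \<noteq> {}"
  using holder_quots_memI[of 0 1 u \<delta>] by force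

lemma holder_quots_cong: "(\<And>t. t \<in> II \<Longrightarrow> u t = v t) \<Longrightarrow> holder_quots \<delta> u = holder_quots \<delta> v"
  unfolding holder_quots_def by (intro Collect_cong) metis

lemma holder_bound_cong: "(\<And>t. t \<in> II \<Longrightarrow> u t = v t) \<Longrightarrow> holder_bound \<delta> u K = holder_bound \<delta> v K"
  unfolding holder_bound_def by auto

lemma holder_quots_le:
  assumes "holder_bound \<delta> u K" "q \<in> holder_quots \<delta> u"
  shows "q \<le> K"
proof -
  obtain t1 t2 where t: "q = \<bar>u t2 - u t1\<bar> / \<bar>t2 - t1\<bar> powr \<delta>" "t1 \<in> II" "t2 \<in> II" "t1 \<noteq> t2"
    using assms(2) unfolding holder_quots_def by blast
  then have "\<bar>u t2 - u t1\<bar> \<le> K * \<bar>t2 - t1\<bar> powr \<delta>"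
    using assms(1) unfolding holder_bound_def by blast
  then show ?thesis using t by (simp add: divide_le_eq)
qed

lemma bdd_above_holder_quotsI: "holder_bound \<delta> u K \<Longrightarrow> bdd_above (holder_quots \<delta> u)"
  using holder_quots_le unfolding bdd_above_def by blast

lemma holder_const_le: "holder_bound \<delta> u K \<Longrightarrow> holder_const \<delta> u \<le> K"
  by (rule cSup_least[OF holder_quots_nonempty]) (rule holder_quots_le)

lemma holder_bound_holder_const:
  assumes "bdd_above (holder_quots \<delta> u)"
  shows "holder_bound \<delta> u (holder_const \<delta> u)"
  unfolding holder_bound_def
proof (intro ballI)
  fix t1 t2 :: real assume t: "t1 \<in> II" "t2 \<in> II"
  show "\<bar>u t2 - u t1\<bar> \<le> holder_const \<delta> u * \<bar>t2 - t1\<bar> powr \<delta>"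
  proof (cases "t1 = t2")
    case False
    have "\<bar>u t2 - u t1\<bar> / \<bar>t2 - t1\<bar> powr \<delta> \<le> holder_const \<delta> u"
      by (rule cSup_upper[OF holder_quots_memI assms]) (use t False in auto)
    then show ?thesis using False by (simp add: divide_le_eq)
  qed simp
qed

lemma holder_bound_nonneg:
  assumes "holder_bound \<delta> u K"
  shows "0 \<le> K"
proof -
  have "\<bar>u 1 - u 0\<bar> \<le> K * \<bar>1 - 0\<bar> powr \<delta>"
    using assms unfolding holder_bound_def by (meson atLeastAtMost_iff order_refl zero_le_one)
  then show ?thesis by simp
qed

lemma holder_const_nonneg: "bdd_above (holder_quots \<delta> u) \<Longrightarrow> 0 \<le> holder_const \<delta> u"
  by (rule holder_bound_nonneg[OF holder_bound_holder_const])

lemma holder_bound_mono: "holder_bound \<delta> u K \<Longrightarrow> K \<le> L \<Longrightarrow> holder_bound \<delta> u L"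
  unfolding holder_bound_def by (meson mult_right_mono order_trans powr_ge_zero)

lemma holder_bound_add:
  assumes "holder_bound \<delta> u K" "holder_bound \<delta> v L"
  shows "holder_bound \<delta> (\<lambda>t. u t + v t) (K + L)"
  unfolding holder_bound_def
proof (intro ballI)
  fix t1 t2 :: real assume t: "t1 \<in> II" "t2 \<in> II"
  have "\<bar>u t2 - u t1\<bar> \<le> K * \<bar>t2 - t1\<bar> powr \<delta>" "\<bar>v t2 - v t1\<bar> \<le> L * \<bar>t2 - t1\<bar> powr \<delta>"
    using assms t unfolding holder_bound_def by auto
  then show "\<bar>u t2 + v t2 - (u t1 + v t1)\<bar> \<le> (K + L) * \<bar>t2 - t1\<bar> powr \<delta>"
    by (simp add: distrib_right abs_le_iff)
qed

lemma holder_bound_diff: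
  assumes "holder_bound \<delta> u K" "holder_bound \<delta> v L"
  shows "holder_bound \<delta> (\<lambda>t. u t - v t) (K + L)"
  unfolding holder_bound_def
proof (intro ballI)
  fix t1 t2 :: real assume t: "t1 \<in> II" "t2 \<in> II"
  have "\<bar>u t2 - u t1\<bar> \<le> K * \<bar>t2 - t1\<bar> powr \<delta>" "\<bar>v t2 - v t1\<bar> \<le> L * \<bar>t2 - t1\<bar> powr \<delta>"
    using assms t unfolding holder_bound_def by auto
  then show "\<bar>u t2 - v t2 - (u t1 - v t1)\<bar> \<le> (K + L) * \<bar>t2 - t1\<bar> powr \<delta>"
    by (simp add: distrib_right abs_le_iff)
qed

lemma holder_bound_of_lipschitz:
  assumes "\<And>t1 t2. t1 \<in> II \<Longrightarrow> t2 \<in> II \<Longrightarrow> \<bar>u t2 - u t1\<bar> \<le> L * \<bar>t2 - t1\<bar>"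
    and "0 \<le> L" "0 < \<delta>" "\<delta> \<le> 1"
  shows "holder_bound \<delta> u L"
  unfolding holder_bound_def
proof (intro ballI)
  fix t1 t2 :: real assume t: "t1 \<in> II" "t2 \<in> II"
  have "\<bar>t2 - t1\<bar> \<le> \<bar>t2 - t1\<bar> powr \<delta>"
  proof (cases "t1 = t2")
    case False
    have "\<bar>t2 - t1\<bar> powr 1 \<le> \<bar>t2 - t1\<bar> powr \<delta>"
      by (rule powr_mono') (use assms t False in auto)
    then show ?thesis using False by simp
  qed simp
  then show "\<bar>u t2 - u t1\<bar> \<le> L * \<bar>t2 - t1\<bar> powr \<delta>"
    using assms(1)[OF t] mult_left_mono[OF _ assms(2)] order_trans by blast
qed

lemma holder_bound_imp_abs_le:
  assumes "holder_bound \<delta> u K" "t \<in> II" "0 < \<delta>"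
  shows "\<bar>u t - u 0\<bar> \<le> K"
proof -
  have "\<bar>u t - u 0\<bar> \<le> K * t powr \<delta>"
    using assms(1,2) unfolding holder_bound_def by force
  also have "\<dots> \<le> K"
    using mult_left_mono[OF powr_le1[of \<delta> t] holder_bound_nonneg[OF assms(1)]] assms(2,3) by simp
  finally show ?thesis .
qed

lemma holder_norm_diff_le:
  assumes "bdd_above (holder_quots \<delta> u)" "bdd_above (holder_quots \<delta> v)"
    and "holder_bound \<delta> (\<lambda>t. u t - v t) K"
  shows "\<bar>holder_norm \<delta> u - holder_norm \<delta> v\<bar> \<le> \<bar>u 0 - v 0\<bar> + K"
proof -
  have "holder_bound \<delta> (\<lambda>t. v t + (u t - v t)) (holder_const \<delta> v + K)"
    by (rule holder_bound_add[OF holder_bound_holder_const[OF assms(2)] assms(3)])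
  then have "holder_const \<delta> u \<le> holder_const \<delta> v + K" by (simp add: holder_const_le)
  moreover have "holder_bound \<delta> (\<lambda>t. u t - (u t - v t)) (holder_const \<delta> u + K)"
    by (rule holder_bound_diff[OF holder_bound_holder_const[OF assms(1)] assms(3)])
  then have "holder_const \<delta> v \<le> holder_const \<delta> u + K" by (simp add: holder_const_le)
  ultimately show ?thesis
    unfolding holder_norm_def using abs_triangle_ineq3[of "u 0" "v 0"] by linarith
qed

section \<open>Derivatives on I\<close>

lemma D_eqI: "t \<in> II \<Longrightarrow> (f has_real_derivative v) (at t within II) \<Longrightarrow> D f t = v"
  unfolding D_def has_real_derivative_iff_has_vector_derivative
  by (rule vector_derivative_within_closed_interval) auto

lemma C1_on_I_has_D: "C1_on_I f \<Longrightarrow> t \<in> II \<Longrightarrow> (f has_real_derivative D f t) (at t within II)"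
  unfolding C1_on_I_def D_def has_real_derivative_iff_has_vector_derivative
  using vector_derivative_works by blast

lemma C1_on_I_continuous_D: "C1_on_I f \<Longrightarrow> continuous_on II (D f)"
  unfolding C1_on_I_def by blast

lemma D_cong:
  assumes "\<And>x. x \<in> II \<Longrightarrow> f x = g x" "t \<in> II"
  shows "D f t = D g t"
proof -
  have "(f has_vector_derivative v) (at t within II) = (g has_vector_derivative v) (at t within II)" for v
    by (rule has_vector_derivative_cong_ev) (use assms in auto)
  then show ?thesis unfolding D_def vector_derivative_def by simp
qed

lemma D_ident: "t \<in> II \<Longrightarrow> D (\<lambda>x. x) t = 1"
  by (rule D_eqI) (auto intro: derivative_eq_intros)

lemma DERIV_comp_within_II:
  assumes "(g has_real_derivative a) (at t within II)"
    and "(k has_real_derivative b) (at (g t) within II)" "g ` II \<subseteq> II"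
  shows "((\<lambda>x. k (g x)) has_real_derivative b * a) (at t within II)"
proof -
  have "(k has_vector_derivative b) (at (g t) within g ` II)"
    using assms(2,3) has_vector_derivative_within_subset
    unfolding has_real_derivative_iff_has_vector_derivative by blast
  from vector_diff_chain_within[OF assms(1)[unfolded has_real_derivative_iff_has_vector_derivative] this]
  show ?thesis unfolding has_real_derivative_iff_has_vector_derivative o_def by (simp add: mult.commute)
qed

lemma mvt_II:
  assumes "a \<in> II" "b \<in> II" "a \<le> b"
    and "\<And>x. x \<in> II \<Longrightarrow> (f has_real_derivative f' x) (at x within II)"
  shows "\<exists>\<xi>\<in>{a..b}. f b - f a = f' \<xi> * (b - a)"
proof -
  have "\<exists>\<xi>\<in>{a..b}. f b - f a = (\<lambda>h. f' \<xi> * h) (b - a)"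
  proof (rule mvt_very_simple[OF assms(3)])
    fix x assume "a \<le> x" "x \<le> b"
    then have "(f has_real_derivative f' x) (at x within {a..b})"
      using assms has_field_derivative_subset[of f "f' x" x II "{a..b}"] by auto
    then show "(f has_derivative (\<lambda>h. f' x * h)) (at x within {a..b})"
      unfolding has_field_derivative_def .
  qed
  then show ?thesis by simp
qed

lemma lipschitz_of_DERIV_bound:
  assumes "\<And>x. x \<in> II \<Longrightarrow> (\<phi> has_real_derivative \<phi>' x) (at x within II)"
    and "\<And>x. x \<in> II \<Longrightarrow> \<bar>\<phi>' x\<bar> \<le> B" "t1 \<in> II" "t2 \<in> II"
  shows "\<bar>\<phi> t2 - \<phi> t1\<bar> \<le> B * \<bar>t2 - t1\<bar>"
  using field_differentiable_bound[OF convex_real_interval(5) assms(1)] assms(2-4) by simp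

lemma expanding_of_DERIV_ge:
  assumes "\<And>x. x \<in> II \<Longrightarrow> (\<phi> has_real_derivative \<phi>' x) (at x within II)"
    and "\<And>x. x \<in> II \<Longrightarrow> \<mu> \<le> \<phi>' x" "0 \<le> \<mu>" "s1 \<in> II" "s2 \<in> II"
  shows "\<mu> * \<bar>s2 - s1\<bar> \<le> \<bar>\<phi> s2 - \<phi> s1\<bar>"
proof -
  have *: "\<mu> * \<bar>b - a\<bar> \<le> \<bar>\<phi> b - \<phi> a\<bar>" if ab: "a \<in> II" "b \<in> II" "a \<le> b" for a b
  proof -
    obtain \<xi> where \<xi>: "\<xi> \<in> {a..b}" "\<phi> b - \<phi> a = \<phi>' \<xi> * (b - a)"
      using mvt_II[OF ab assms(1)] by blast
    have "\<mu> \<le> \<phi>' \<xi>" using \<xi>(1) ab by (intro assms(2)) auto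
    then have "\<mu> * (b - a) \<le> \<phi>' \<xi> * (b - a)" using ab by (simp add: mult_right_mono)
    moreover have "0 \<le> \<mu> * (b - a)" using ab assms(3) by simp
    ultimately show ?thesis using \<xi>(2) ab by simp
  qed
  show ?thesis
    using *[OF assms(4,5)] *[OF assms(5,4)] by (cases "s1 \<le> s2") (auto simp: abs_minus_commute)
qed

lemma continuous_on_II_attains_pos_min:
  fixes h :: "real \<Rightarrow> real"
  assumes "continuous_on II h" "\<And>t. t \<in> II \<Longrightarrow> h t > 0"
  obtains m where "m > 0" "\<And>t. t \<in> II \<Longrightarrow> m \<le> h t"
proof -
  obtain x where "x \<in> II" "\<forall>y\<in>II. h x \<le> h y"
    using continuous_attains_inf[of II h] assms(1) by auto
  then show ?thesis using assms(2) that by blast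
qed

lemma continuous_on_II_bounded:
  fixes h :: "real \<Rightarrow> real"
  assumes "continuous_on II h"
  obtains M where "\<And>t. t \<in> II \<Longrightarrow> \<bar>h t\<bar> \<le> M"
  using compact_imp_bounded[OF compact_continuous_image[OF assms compact_Icc]]
  unfolding bounded_iff by (metis image_eqI real_norm_def)

lemma Diff1_image: "f \<in> Diff1 \<Longrightarrow> f ` II = II"
  unfolding Diff1_def bij_betw_def by blast

text \<open>The chain rule for the inverse excludes zeros of the derivative; by the intermediate value
  theorem its sign is then that of the mean slope f 1 - f 0 = 1.\<close>
lemma Diff1_D_pos:
  assumes f: "f \<in> Diff1" and t: "t \<in> II"
  shows "D f t > 0"
proof -
  let ?g = "inv_into II f"
  have bij: "bij_betw f II II" and c1: "C1_on_I f" and c1g: "C1_on_I ?g" and f01: "f 0 = 0" "f 1 = 1"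
    using f unfolding Diff1_def by auto
  have img: "f ` II \<subseteq> II" using Diff1_image[OF f] by simp
  have nz: "D f s \<noteq> 0" if s: "s \<in> II" for s
  proof
    assume z: "D f s = 0"
    have "((\<lambda>x. ?g (f x)) has_real_derivative D ?g (f s) * D f s) (at s within II)"
      using img s by (intro DERIV_comp_within_II[OF C1_on_I_has_D[OF c1 s] C1_on_I_has_D[OF c1g]]) blast+
    moreover have "?g (f x) = x" if "x \<in> II" for x
      using bij that by (simp add: bij_betw_def)
    ultimately have "((\<lambda>x. x) has_real_derivative 0) (at s within II)"
      using has_vector_derivative_cong_ev[of II "\<lambda>x. ?g (f x)" "\<lambda>x. x" s] s z
      unfolding has_real_derivative_iff_has_vector_derivative by simp
    then show False using D_eqI[OF s] D_ident[OF s] by simp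
  qed
  obtain \<xi> where \<xi>: "\<xi> \<in> II" "D f \<xi> > 0"
    using mvt_II[of 0 1 f "D f"] C1_on_I_has_D[OF c1] f01 by auto
  have cont: "continuous_on {a..b} (D f)" if "a \<in> II" "b \<in> II" for a b
    using continuous_on_subset[OF C1_on_I_continuous_D[OF c1]] that by auto
  show ?thesis
  proof (rule ccontr)
    assume "\<not> D f t > 0"
    then have neg: "D f t < 0" using nz[OF t] by linarith
    consider "t \<le> \<xi>" | "\<xi> \<le> t" by linarith
    then show False
    proof cases
      case 1
      then obtain x where "t \<le> x" "x \<le> \<xi>" "D f x = 0"
        using IVT'[of "D f" t 0 \<xi>] neg \<xi> cont[OF t \<xi>(1)] by auto
      then show False using nz t \<xi>(1) by auto
    next
      case 2
      then obtain x where "\<xi> \<le> x" "x \<le> t" "D f x = 0"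
        using IVT2'[of "D f" t 0 \<xi>] neg \<xi> cont[OF \<xi>(1) t] by auto
      then show False using nz t \<xi>(1) by auto
    qed
  qed
qed

lemma Diff1dD:
  assumes "g \<in> Diff1d \<delta>"
  shows "C1_on_I g" "g 0 = 0" "g ` II = II" "\<And>t. t \<in> II \<Longrightarrow> g t \<in> II"
    "\<And>t. t \<in> II \<Longrightarrow> D g t > 0" "bdd_above (holder_quots \<delta> (D g))"
proof -
  have g: "g \<in> Diff1" "g \<in> C01d \<delta>" using assms unfolding Diff1d_def by auto
  then show "C1_on_I g" "g 0 = 0" "g ` II = II" "\<And>t. t \<in> II \<Longrightarrow> D g t > 0"
    "bdd_above (holder_quots \<delta> (D g))"
    using Diff1_image Diff1_D_pos unfolding C01d_def by auto
  show "\<And>t. t \<in> II \<Longrightarrow> g t \<in> II" using Diff1_image[OF g(1)] by blast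
qed

section \<open>Continuity of p_delta along left translates\<close>

text \<open>The identity and every element of Diff^3_0(I) are regular, and regularity is all that is
  used of the group G.\<close>
definition regular_map :: "(real \<Rightarrow> real) \<Rightarrow> bool" where
  "regular_map k \<longleftrightarrow> (\<forall>x\<in>II. k x \<in> II) \<and> (\<forall>x\<in>II. (k has_real_derivative D k x) (at x within II))
    \<and> (\<forall>x\<in>II. D k x > 0)
    \<and> (\<exists>u' L. (\<forall>x\<in>II. ((\<lambda>x. ln (D k x)) has_real_derivative u' x) (at x within II))
        \<and> (\<forall>x\<in>II. \<forall>y\<in>II. \<bar>u' x - u' y\<bar> \<le> L * \<bar>x - y\<bar>))"

lemma regular_mapE:
  assumes "regular_map k"
  obtains u' L1 L2 where "\<And>x. x \<in> II \<Longrightarrow> k x \<in> II"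
    "\<And>x. x \<in> II \<Longrightarrow> (k has_real_derivative D k x) (at x within II)"
    "\<And>x. x \<in> II \<Longrightarrow> D k x > 0"
    "\<And>x. x \<in> II \<Longrightarrow> ((\<lambda>x. ln (D k x)) has_real_derivative u' x) (at x within II)"
    "\<And>x. x \<in> II \<Longrightarrow> \<bar>u' x\<bar> \<le> L1"
    "\<And>x y. x \<in> II \<Longrightarrow> y \<in> II \<Longrightarrow> \<bar>u' x - u' y\<bar> \<le> L2 * \<bar>x - y\<bar>" "0 \<le> L1" "0 \<le> L2"
proof -
  obtain u' L where u': "\<forall>x\<in>II. ((\<lambda>x. ln (D k x)) has_real_derivative u' x) (at x within II)"
    and L: "\<forall>x\<in>II. \<forall>y\<in>II. \<bar>u' x - u' y\<bar> \<le> L * \<bar>x - y\<bar>"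
    using assms unfolding regular_map_def by blast
  have L0: "0 \<le> L" using L[rule_format, of 0 1] by simp
  have "\<bar>u' x\<bar> \<le> \<bar>u' 0\<bar> + L" if "x \<in> II" for x
    using L[rule_format, OF that, of 0] mult_left_le[of x L] L0 that by auto
  then show thesis
    using that[of u' "\<bar>u' 0\<bar> + L" L] u' L L0 assms unfolding regular_map_def by auto
qed

lemma regular_map_ident: "regular_map (\<lambda>x. x)"
proof -
  have "((\<lambda>x. ln (D (\<lambda>x. x) x)) has_real_derivative 0) (at x within II)" if "x \<in> II" for x
    using has_vector_derivative_cong_ev[of II "\<lambda>x. ln (D (\<lambda>x. x) x)" "\<lambda>x. 0" x 0] that D_ident
    unfolding has_real_derivative_iff_has_vector_derivative by simp
  then show ?thesis unfolding regular_map_def using D_ident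
    by (intro conjI ballI exI[of _ "\<lambda>_. 0"] exI[of _ 0]) auto
qed

lemma regular_map_Diff03:
  assumes k: "k \<in> Diff03"
  shows "regular_map k"
proof -
  have bij: "bij_betw k II II" and c3: "C3_on_I k" "C3_on_I (inv_into II k)"
    and k01: "k 0 = 0" "k 1 = 1" using k unfolding Diff03_def by auto
  have c1: "C1_on_I k" "C1_on_I (D k)" "C1_on_I (D (D k))" using c3 unfolding C3_on_I_def by auto
  have "k \<in> Diff1" unfolding Diff1_def using bij c1(1) c3 k01 unfolding C3_on_I_def by auto
  then have pos: "\<And>x. x \<in> II \<Longrightarrow> D k x > 0" by (rule Diff1_D_pos)
  define u' where "u' = (\<lambda>x. D (D k) x / D k x)"
  define u'' where "u'' = (\<lambda>x. (D (D (D k)) x * D k x - D (D k) x * D (D k) x) / (D k x * D k x))"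
  have du: "((\<lambda>x. ln (D k x)) has_real_derivative u' x) (at x within II)" if x: "x \<in> II" for x
  proof (rule DERIV_cong)
    show "((\<lambda>x. ln (D k x)) has_real_derivative inverse (D k x) * D (D k) x) (at x within II)"
      by (rule DERIV_chain2[OF DERIV_ln[OF pos[OF x]] C1_on_I_has_D[OF c1(2) x]])
    show "inverse (D k x) * D (D k) x = u' x" unfolding u'_def by (simp add: field_simps)
  qed
  have du': "(u' has_real_derivative u'' x) (at x within II)" if x: "x \<in> II" for x
    unfolding u'_def u''_def
    by (rule DERIV_divide[OF C1_on_I_has_D[OF c1(3) x] C1_on_I_has_D[OF c1(2) x]]) (use pos[OF x] in simp)
  have "continuous_on II u''" unfolding u''_def
    using C1_on_I_continuous_D c1 pos by (intro continuous_intros) fastforce+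
  then obtain L where L: "\<And>x. x \<in> II \<Longrightarrow> \<bar>u'' x\<bar> \<le> L" using continuous_on_II_bounded by blast
  have "\<bar>u' x - u' y\<bar> \<le> L * \<bar>x - y\<bar>" if "x \<in> II" "y \<in> II" for x y
    by (rule lipschitz_of_DERIV_bound[OF du' L that(2,1)])
  then show ?thesis unfolding regular_map_def
    using bij C1_on_I_has_D[OF c1(1)] pos du by (auto simp: bij_betw_def intro!: exI[of _ u'] exI[of _ L])
qed

lemma D_comp:
  assumes "regular_map k" "C1_on_I g" "g ` II \<subseteq> II" "t \<in> II"
  shows "((\<lambda>x. k (g x)) has_real_derivative D k (g t) * D g t) (at t within II)"
    and "D (\<lambda>x. k (g x)) t = D k (g t) * D g t"
proof -
  have "g t \<in> II" using assms(3,4) by blast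
  then show *: "((\<lambda>x. k (g x)) has_real_derivative D k (g t) * D g t) (at t within II)"
    using assms by (intro DERIV_comp_within_II[OF C1_on_I_has_D]) (auto simp: regular_map_def)
  show "D (\<lambda>x. k (g x)) t = D k (g t) * D g t" by (rule D_eqI[OF assms(4) *])
qed

lemma ln_D_comp:
  assumes "regular_map k" "g \<in> Diff1d \<delta>" "t \<in> II"
  shows "ln (D (\<lambda>x. k (g x)) t) = ln (D k (g t)) + ln (D g t)"
proof -
  have "D k (g t) > 0" using assms Diff1dD(4)[OF assms(2)] unfolding regular_map_def by blast
  moreover have "D g t > 0" by (rule Diff1dD(5)[OF assms(2,3)])
  ultimately show ?thesis
    using D_comp(2)[OF assms(1) Diff1dD(1)[OF assms(2)] _ assms(3)] Diff1dD(3)[OF assms(2)]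
    by (simp add: ln_mult)
qed

lemma abs_ln_diff_le:
  fixes x y :: real
  assumes "0 < x" "0 < y"
  shows "\<bar>ln x - ln y\<bar> \<le> \<bar>x - y\<bar> / min x y"
proof -
  have *: "ln b - ln a \<le> (b - a) / a" if "0 < a" "a \<le> b" for a b :: real
    using ln_le_minus_one[of "b / a"] that by (simp add: ln_div diff_divide_distrib)
  show ?thesis
    using *[of x y] *[of y x] assms by (cases "x \<le> y") (auto simp: abs_if min_def)
qed

lemma holder_bound_ln:
  assumes "\<And>t. t \<in> II \<Longrightarrow> m \<le> h t" "0 < m" "holder_bound \<delta> h H"
  shows "holder_bound \<delta> (\<lambda>t. ln (h t)) (H / m)"
  unfolding holder_bound_def
proof (intro ballI)
  fix t1 t2 :: real assume t: "t1 \<in> II" "t2 \<in> II"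
  have p: "h t1 > 0" "h t2 > 0" using assms(1,2) t by (auto intro: less_le_trans)
  have "\<bar>ln (h t2) - ln (h t1)\<bar> \<le> \<bar>h t2 - h t1\<bar> / min (h t2) (h t1)" by (rule abs_ln_diff_le[OF p(2,1)])
  also have "\<dots> \<le> \<bar>h t2 - h t1\<bar> / m"
    by (rule divide_left_mono) (use assms(1,2) t p in auto)
  also have "\<dots> \<le> H * \<bar>t2 - t1\<bar> powr \<delta> / m"
    by (rule divide_right_mono) (use assms(2,3) t in \<open>auto simp: holder_bound_def\<close>)
  finally show "\<bar>ln (h t2) - ln (h t1)\<bar> \<le> H / m * \<bar>t2 - t1\<bar> powr \<delta>" by simp
qed

lemma Diff1d_D_bounds:
  assumes "g \<in> Diff1d \<delta>"
  obtains m M where "0 < m" "\<And>t. t \<in> II \<Longrightarrow> m \<le> D g t" "\<And>t. t \<in> II \<Longrightarrow> D g t \<le> M"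
proof -
  obtain m where "0 < m" "\<And>t. t \<in> II \<Longrightarrow> m \<le> D g t"
    using continuous_on_II_attains_pos_min[OF C1_on_I_continuous_D[OF Diff1dD(1)[OF assms]]
        Diff1dD(5)[OF assms]] by blast
  moreover obtain M where "\<And>t. t \<in> II \<Longrightarrow> \<bar>D g t\<bar> \<le> M"
    using continuous_on_II_bounded[OF C1_on_I_continuous_D[OF Diff1dD(1)[OF assms]]] by blast
  ultimately show thesis using that abs_le_D1 by blast
qed

lemma holder_bound_comp_lipschitz:
  assumes "\<And>x. x \<in> II \<Longrightarrow> (\<phi> has_real_derivative \<phi>' x) (at x within II)"
    and "\<And>x. x \<in> II \<Longrightarrow> \<bar>\<phi>' x\<bar> \<le> L" "0 \<le> L"
    and g: "g \<in> Diff1d \<delta>" "\<And>t. t \<in> II \<Longrightarrow> D g t \<le> M" "0 < \<delta>" "\<delta> \<le> 1"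
  shows "holder_bound \<delta> (\<lambda>t. \<phi> (g t)) (L * M)"
proof (rule holder_bound_of_lipschitz)
  show "0 \<le> L * M" using assms(3) g(2)[of 0] Diff1dD(5)[OF g(1), of 0] by simp
  fix t1 t2 :: real assume "t1 \<in> II" "t2 \<in> II"
  then show "\<bar>\<phi> (g t2) - \<phi> (g t1)\<bar> \<le> L * M * \<bar>t2 - t1\<bar>"
  proof (rule lipschitz_of_DERIV_bound[of _ "\<lambda>x. \<phi>' (g x) * D g x", rotated 2])
    fix x :: real assume x: "x \<in> II"
    show "((\<lambda>x. \<phi> (g x)) has_real_derivative \<phi>' (g x) * D g x) (at x within II)"
      using x Diff1dD(3,4)[OF g(1)] assms(1)
      by (intro DERIV_comp_within_II[OF C1_on_I_has_D[OF Diff1dD(1)[OF g(1)]]]) auto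
    show "\<bar>\<phi>' (g x) * D g x\<bar> \<le> L * M"
      unfolding abs_mult using x assms(2,3) g(2) Diff1dD(4,5)[OF g(1)]
      by (intro mult_mono) (auto simp: less_imp_le)
  qed
qed (use g in auto)

lemma bdd_above_holder_quots_ln_D_comp:
  assumes k: "regular_map k" and g: "g \<in> Diff1d \<delta>" and "0 < \<delta>" "\<delta> \<le> 1"
  shows "bdd_above (holder_quots \<delta> (\<lambda>t. ln (D (\<lambda>x. k (g x)) t)))"
proof -
  obtain u' L1 L2 where u': "\<And>x. x \<in> II \<Longrightarrow> ((\<lambda>x. ln (D k x)) has_real_derivative u' x) (at x within II)"
    and L1: "\<And>x. x \<in> II \<Longrightarrow> \<bar>u' x\<bar> \<le> L1" "0 \<le> L1"
    using regular_mapE[OF k] by metis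
  obtain m M where m: "0 < m" "\<And>t. t \<in> II \<Longrightarrow> m \<le> D g t" and M: "\<And>t. t \<in> II \<Longrightarrow> D g t \<le> M"
    using Diff1d_D_bounds[OF g] by blast
  have "holder_bound \<delta> (\<lambda>t. ln (D k (g t)) + ln (D g t)) (L1 * M + holder_const \<delta> (D g) / m)"
    using holder_bound_comp_lipschitz[OF u' L1 g M assms(3,4)]
      holder_bound_ln[OF m(2,1) holder_bound_holder_const[OF Diff1dD(6)[OF g]]]
    by (rule holder_bound_add)
  then have "holder_bound \<delta> (\<lambda>t. ln (D (\<lambda>x. k (g x)) t)) (L1 * M + holder_const \<delta> (D g) / m)"
    by (subst holder_bound_cong[OF ln_D_comp[OF k g]])
  then show ?thesis by (rule bdd_above_holder_quotsI)
qed

lemma Diff1d_close_D: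
  assumes f: "f \<in> Diff1d \<delta>" and g: "g \<in> Diff1d \<delta>" and "0 < \<delta>"
    and close: "norm1d \<delta> (\<lambda>t. g t - f t) < \<eta>"
  shows "\<And>t. t \<in> II \<Longrightarrow> \<bar>D g t - D f t\<bar> < \<eta>"
    and "holder_bound \<delta> (\<lambda>t. D g t - D f t) \<eta>"
proof -
  let ?w = "\<lambda>t. D g t - D f t"
  have Dw: "D (\<lambda>t. g t - f t) t = ?w t" if "t \<in> II" for t
    using that Diff1dD(1)[OF f] Diff1dD(1)[OF g]
    by (intro D_eqI) (auto intro!: derivative_eq_intros C1_on_I_has_D)
  have bdd: "bdd_above (holder_quots \<delta> ?w)"
    by (rule bdd_above_holder_quotsI[OF holder_bound_diff[OF holder_bound_holder_const
          holder_bound_holder_const]]) (use Diff1dD(6) f g in auto)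
  have norm: "\<bar>?w 0\<bar> + holder_const \<delta> ?w < \<eta>"
    using close Dw holder_quots_cong[OF Dw] unfolding norm1d_def by simp
  show "holder_bound \<delta> ?w \<eta>"
    by (rule holder_bound_mono[OF holder_bound_holder_const[OF bdd]]) (use norm in simp)
  fix t :: real assume "t \<in> II"
  then have "\<bar>?w t - ?w 0\<bar> \<le> holder_const \<delta> ?w"
    using holder_bound_imp_abs_le[OF holder_bound_holder_const[OF bdd]] assms(3) by blast
  then show "\<bar>D g t - D f t\<bar> < \<eta>" using norm by linarith
qed

lemma Diff1d_close_values:
  assumes f: "f \<in> Diff1d \<delta>" and g: "g \<in> Diff1d \<delta>"
    and "\<And>t. t \<in> II \<Longrightarrow> \<bar>D g t - D f t\<bar> \<le> \<eta>" "t \<in> II"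
  shows "\<bar>g t - f t\<bar> \<le> \<eta>"
proof -
  have "\<bar>(g t - f t) - (g 0 - f 0)\<bar> \<le> \<eta> * \<bar>t - 0\<bar>"
    using assms(3,4) Diff1dD(1)[OF f] Diff1dD(1)[OF g]
    by (intro lipschitz_of_DERIV_bound[of _ "\<lambda>t. D g t - D f t"])
      (auto intro!: derivative_intros C1_on_I_has_D)
  moreover have "\<eta> * t \<le> \<eta>"
    using assms(3)[of 0] assms(4) by (intro mult_left_le) auto
  ultimately show ?thesis using Diff1dD(2)[OF f] Diff1dD(2)[OF g] assms(4) by simp
qed

lemma holder_bound_ln_perturb:
  assumes "0 < m" "\<And>t. t \<in> II \<Longrightarrow> m \<le> a t" "\<And>t. t \<in> II \<Longrightarrow> a t \<le> M"
    and "\<And>t. t \<in> II \<Longrightarrow> \<bar>w t\<bar> \<le> e" "e \<le> m / 2"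
    and "holder_bound \<delta> w e" "holder_bound \<delta> a H"
  shows "holder_bound \<delta> (\<lambda>t. ln (a t + w t) - ln (a t)) (e * (2 * (M + H) / m\<^sup>2))"
  unfolding holder_bound_def
proof (intro ballI)
  fix t1 t2 :: real assume t: "t1 \<in> II" "t2 \<in> II"
  define d where "d = \<bar>t2 - t1\<bar> powr \<delta>"
  define b1 b2 where "b1 = a t1 + w t1" and "b2 = a t2 + w t2"
  have a: "m \<le> a t1" "a t1 \<le> M" "m \<le> a t2" "a t2 \<le> M" using assms(2,3) t by auto
  have w: "\<bar>w t1\<bar> \<le> e" "\<bar>w t2\<bar> \<le> e" using assms(4) t by auto
  have b: "m / 2 \<le> b1" "m / 2 \<le> b2" using a w assms(5) unfolding b1_def b2_def by auto
  have pos: "a t1 > 0" "a t2 > 0" "b1 > 0" "b2 > 0" using a b assms(1) by auto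
  have "(ln b2 - ln (a t2)) - (ln b1 - ln (a t1)) = ln (b2 * a t1) - ln (b1 * a t2)"
    using pos by (simp add: ln_mult)
  moreover have "\<bar>ln (b2 * a t1) - ln (b1 * a t2)\<bar> \<le> \<bar>b2 * a t1 - b1 * a t2\<bar> / min (b2 * a t1) (b1 * a t2)"
    by (rule abs_ln_diff_le) (use pos in auto)
  moreover have "\<bar>b2 * a t1 - b1 * a t2\<bar> \<le> e * d * (M + H)"
  proof -
    have "b2 * a t1 - b1 * a t2 = (w t2 - w t1) * a t1 - w t1 * (a t2 - a t1)"
      unfolding b1_def b2_def by (simp add: algebra_simps)
    then have "\<bar>b2 * a t1 - b1 * a t2\<bar> \<le> \<bar>w t2 - w t1\<bar> * a t1 + \<bar>w t1\<bar> * \<bar>a t2 - a t1\<bar>"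
      using pos by (simp add: abs_mult abs_triangle_ineq4[THEN order_trans])
    also have "\<dots> \<le> (e * d) * M + e * (H * d)"
      using assms(6,7) t a w pos unfolding holder_bound_def d_def
      by (intro add_mono mult_mono) (auto simp: holder_bound_nonneg[OF assms(6)])
    finally show ?thesis by (simp add: algebra_simps)
  qed
  moreover have "(m / 2) * m \<le> b2 * a t1" "(m / 2) * m \<le> b1 * a t2"
    using a b assms(1) by (intro mult_mono; simp)+
  then have "(m / 2) * m \<le> min (b2 * a t1) (b1 * a t2)" by simp
  moreover have "0 \<le> e * d * (M + H)"
    using w a assms(1) holder_bound_nonneg[OF assms(7)] unfolding d_def by simp
  ultimately have "\<bar>(ln b2 - ln (a t2)) - (ln b1 - ln (a t1))\<bar> \<le> (e * d * (M + H)) / ((m / 2) * m)"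
    using assms(1) frac_le[of "e * d * (M + H)" "\<bar>b2 * a t1 - b1 * a t2\<bar>" "(m / 2) * m"]
    by (smt (verit) half_gt_zero mult_pos_pos)
  also have "\<dots> = e * (2 * (M + H) / m\<^sup>2) * d" using assms(1) by (simp add: power2_eq_square field_simps)
  finally show "\<bar>ln (a t2 + w t2) - ln (a t2) - (ln (a t1 + w t1) - ln (a t1))\<bar>
      \<le> e * (2 * (M + H) / m\<^sup>2) * \<bar>t2 - t1\<bar> powr \<delta>"
    unfolding b1_def b2_def d_def .
qed

lemma holder_bound_comp_diff:
  assumes \<phi>: "\<And>x. x \<in> II \<Longrightarrow> (\<phi> has_real_derivative \<phi>' x) (at x within II)"
    and L1: "\<And>x. x \<in> II \<Longrightarrow> \<bar>\<phi>' x\<bar> \<le> L1"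
    and L2: "\<And>x y. x \<in> II \<Longrightarrow> y \<in> II \<Longrightarrow> \<bar>\<phi>' x - \<phi>' y\<bar> \<le> L2 * \<bar>x - y\<bar>" "0 \<le> L2"
    and f: "f \<in> Diff1d \<delta>" and g: "g \<in> Diff1d \<delta>" "\<And>t. t \<in> II \<Longrightarrow> D g t \<le> M"
    and close: "\<And>t. t \<in> II \<Longrightarrow> \<bar>g t - f t\<bar> \<le> \<eta>" "\<And>t. t \<in> II \<Longrightarrow> \<bar>D g t - D f t\<bar> \<le> \<eta>"
    and "0 < \<delta>" "\<delta> \<le> 1"
  shows "holder_bound \<delta> (\<lambda>t. \<phi> (g t) - \<phi> (f t)) (\<eta> * (L2 * M + L1))"
proof (rule holder_bound_of_lipschitz)
  have "0 \<le> \<eta>" "0 \<le> M" "0 \<le> L1"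
    using close(1)[of 0] g(2)[of 0] Diff1dD(5)[OF g(1), of 0] L1[of 0] by auto
  then show "0 \<le> \<eta> * (L2 * M + L1)" using L2(2) by simp
  fix t1 t2 :: real assume "t1 \<in> II" "t2 \<in> II"
  then show "\<bar>\<phi> (g t2) - \<phi> (f t2) - (\<phi> (g t1) - \<phi> (f t1))\<bar> \<le> \<eta> * (L2 * M + L1) * \<bar>t2 - t1\<bar>"
  proof (rule lipschitz_of_DERIV_bound[of _ "\<lambda>x. \<phi>' (g x) * D g x - \<phi>' (f x) * D f x", rotated 2])
    fix x :: real assume x: "x \<in> II"
    have gx: "g x \<in> II" and fx: "f x \<in> II" using Diff1dD(4) f g x by auto
    show "((\<lambda>t. \<phi> (g t) - \<phi> (f t)) has_real_derivative \<phi>' (g x) * D g x - \<phi>' (f x) * D f x) (at x within II)"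
      using x Diff1dD(3) f g \<phi>[OF gx] \<phi>[OF fx]
      by (intro derivative_intros DERIV_comp_within_II[OF C1_on_I_has_D[OF Diff1dD(1)]]) auto
    have "\<bar>\<phi>' (g x) - \<phi>' (f x)\<bar> * D g x \<le> (L2 * \<eta>) * M"
      using L2(1)[OF gx fx] mult_left_mono[OF close(1)[OF x] L2(2)] g(2)[OF x] Diff1dD(5)[OF g(1) x] L2(2)
      by (intro mult_mono) auto
    moreover have "\<bar>\<phi>' (f x)\<bar> * \<bar>D g x - D f x\<bar> \<le> L1 * \<eta>"
      using L1[OF fx] close(2)[OF x] by (intro mult_mono) auto
    moreover have "\<phi>' (g x) * D g x - \<phi>' (f x) * D f x
        = (\<phi>' (g x) - \<phi>' (f x)) * D g x + \<phi>' (f x) * (D g x - D f x)"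
      by (simp add: algebra_simps)
    ultimately show "\<bar>\<phi>' (g x) * D g x - \<phi>' (f x) * D f x\<bar> \<le> \<eta> * (L2 * M + L1)"
      using abs_triangle_ineq[of "(\<phi>' (g x) - \<phi>' (f x)) * D g x" "\<phi>' (f x) * (D g x - D f x)"]
        Diff1dD(5)[OF g(1) x]
      by (simp add: abs_mult distrib_left mult_ac)
  qed
qed (use assms in auto)

lemma continuous_p_delta_comp:
  assumes \<delta>: "0 < \<delta>" "\<delta> \<le> 1" and k: "regular_map k" and f: "f \<in> Diff1d \<delta>" and "0 < \<epsilon>"
  shows "\<exists>\<eta>>0. \<forall>g\<in>Diff1d \<delta>. norm1d \<delta> (\<lambda>t. g t - f t) < \<eta> \<longrightarrow>
           \<bar>p_delta \<delta> (\<lambda>x. k (g x)) - p_delta \<delta> (\<lambda>x. k (f x))\<bar> < \<epsilon>"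
proof -
  obtain u' L1 L2 where kI: "\<And>x. x \<in> II \<Longrightarrow> k x \<in> II"
    and u': "\<And>x. x \<in> II \<Longrightarrow> ((\<lambda>x. ln (D k x)) has_real_derivative u' x) (at x within II)"
    and L1: "\<And>x. x \<in> II \<Longrightarrow> \<bar>u' x\<bar> \<le> L1" "0 \<le> L1"
    and L2: "\<And>x y. x \<in> II \<Longrightarrow> y \<in> II \<Longrightarrow> \<bar>u' x - u' y\<bar> \<le> L2 * \<bar>x - y\<bar>" "0 \<le> L2"
    using regular_mapE[OF k] by metis
  obtain m M where m: "0 < m" "\<And>t. t \<in> II \<Longrightarrow> m \<le> D f t" and M: "\<And>t. t \<in> II \<Longrightarrow> D f t \<le> M"
    using Diff1d_D_bounds[OF f] by blast
  have M0: "0 \<le> M" using m M[of 0] by fastforce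
  define H where "H = holder_const \<delta> (D f)"
  have H: "holder_bound \<delta> (D f) H" "0 \<le> H"
    unfolding H_def using Diff1dD(6)[OF f] by (auto intro: holder_bound_holder_const holder_const_nonneg)
  define C where "C = 2 / m + 2 * (M + H) / m\<^sup>2 + (L2 * (M + m) + L1)"
  have C0: "0 \<le> C" unfolding C_def using m M0 H L1 L2 by simp
  define \<eta> where "\<eta> = min (m / 2) (\<epsilon> / (C + 1))"
  have \<eta>: "0 < \<eta>" "\<eta> \<le> m / 2" "\<eta> * C < \<epsilon>"
  proof -
    have "\<eta> * (C + 1) \<le> \<epsilon> / (C + 1) * (C + 1)"
      unfolding \<eta>_def using C0 by (intro mult_right_mono) auto
    then have bound: "\<eta> * (C + 1) \<le> \<epsilon>" using C0 by simp
    show "\<eta> \<le> m / 2" unfolding \<eta>_def by (rule min.cobounded1)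
    show "0 < \<eta>" unfolding \<eta>_def using m(1) C0 \<open>0 < \<epsilon>\<close> by simp
    then show "\<eta> * C < \<epsilon>" using bound by (simp add: algebra_simps)
  qed
  show ?thesis
  proof (intro exI[of _ \<eta>] conjI ballI impI \<open>0 < \<eta>\<close>)
    fix g assume g: "g \<in> Diff1d \<delta>" and close: "norm1d \<delta> (\<lambda>t. g t - f t) < \<eta>"
    have dD: "\<And>t. t \<in> II \<Longrightarrow> \<bar>D g t - D f t\<bar> \<le> \<eta>" "holder_bound \<delta> (\<lambda>t. D g t - D f t) \<eta>"
      using Diff1d_close_D[OF f g \<delta>(1) close] by (auto intro: less_imp_le)
    have Dg: "m / 2 \<le> D g t" "D g t \<le> M + m" if "t \<in> II" for t
      using dD(1)[OF that] m(2)[OF that] M[OF that] \<eta>(2) by (auto simp: abs_le_iff)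
    have "holder_bound \<delta> (\<lambda>t. ln (D f t + (D g t - D f t)) - ln (D f t)) (\<eta> * (2 * (M + H) / m\<^sup>2))"
      by (rule holder_bound_ln_perturb[OF m M dD(1) \<eta>(2) dD(2) H(1)])
    then have HolF: "holder_bound \<delta> (\<lambda>t. ln (D g t) - ln (D f t)) (\<eta> * (2 * (M + H) / m\<^sup>2))"
      by simp
    have HolP: "holder_bound \<delta> (\<lambda>t. ln (D k (g t)) - ln (D k (f t))) (\<eta> * (L2 * (M + m) + L1))"
      using Diff1d_close_values[OF f g dD(1)] Dg(2) dD(1)
      by (intro holder_bound_comp_diff[OF u' L1(1) L2 f g] \<delta>) auto
    let ?A = "\<lambda>t. ln (D (\<lambda>x. k (g x)) t)" and ?B = "\<lambda>t. ln (D (\<lambda>x. k (f x)) t)"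
    have AB: "?A t - ?B t = (ln (D k (g t)) - ln (D k (f t))) + (ln (D g t) - ln (D f t))"
      if "t \<in> II" for t
      using ln_D_comp[OF k g that] ln_D_comp[OF k f that] by simp
    have HolAB: "holder_bound \<delta> (\<lambda>t. ?A t - ?B t) (\<eta> * (L2 * (M + m) + L1) + \<eta> * (2 * (M + H) / m\<^sup>2))"
      using holder_bound_add[OF HolP HolF] holder_bound_cong[of "\<lambda>t. ?A t - ?B t"] AB by simp
    have "\<bar>?A 0 - ?B 0\<bar> \<le> \<bar>D g 0 - D f 0\<bar> / min (D g 0) (D f 0)"
      using AB[of 0] Diff1dD(2)[OF f] Diff1dD(2)[OF g] Diff1dD(5)[OF f, of 0] Diff1dD(5)[OF g, of 0]
      by (simp add: abs_ln_diff_le)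
    also have "\<dots> \<le> \<eta> / (m / 2)"
      using dD(1)[of 0] Dg(1)[of 0] m(1) m(2)[of 0] by (intro frac_le) auto
    finally have AB0: "\<bar>?A 0 - ?B 0\<bar> \<le> \<eta> * (2 / m)" by simp
    have "\<bar>holder_norm \<delta> ?A - holder_norm \<delta> ?B\<bar>
        \<le> \<bar>?A 0 - ?B 0\<bar> + (\<eta> * (L2 * (M + m) + L1) + \<eta> * (2 * (M + H) / m\<^sup>2))"
      using bdd_above_holder_quots_ln_D_comp[OF k g \<delta>] bdd_above_holder_quots_ln_D_comp[OF k f \<delta>] HolAB
      by (rule holder_norm_diff_le)
    also have "\<dots> \<le> \<eta> * C" using AB0 unfolding C_def by (simp add: algebra_simps)
    finally show "\<bar>p_delta \<delta> (\<lambda>x. k (g x)) - p_delta \<delta> (\<lambda>x. k (f x))\<bar> < \<epsilon>"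
      using \<eta>(3) unfolding p_delta_eq_holder_norm by simp
  qed
qed

lemma continuous_p_delta:
  assumes "0 < \<delta>" "\<delta> \<le> 1"
  shows "cont_1d \<delta> (p_delta \<delta>)"
  using continuous_p_delta_comp[OF assms regular_map_ident] unfolding cont_1d_def by simp

section \<open>Finiteness from condition (a)\<close>

lemma floor_divide_eq_imp_abs_diff_less:
  fixes a b e :: real
  assumes "\<lfloor>a / e\<rfloor> = \<lfloor>b / e\<rfloor>" "0 < e"
  shows "\<bar>a - b\<bar> < e"
proof -
  have "\<bar>a / e - b / e\<bar> < 1"
    using floor_correct[of "a / e"] floor_correct[of "b / e"] assms(1) by linarith
  then have "\<bar>a - b\<bar> / e < 1" using assms(2) by (simp add: diff_divide_distrib abs_div_pos)
  then show ?thesis using assms(2) by (simp add: pos_divide_less_eq)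
qed

lemma ex_grid_powr_le:
  fixes \<delta> q :: real
  assumes "0 < \<delta>" "0 < q"
  obtains N :: nat where "0 < N" "(1 / real N) powr \<delta> \<le> q"
proof -
  have "((\<lambda>n. real n powr (- \<delta>)) \<longlongrightarrow> 0) sequentially"
    using assms(1) by (intro tendsto_neg_powr filterlim_real_sequentially) simp
  then have "eventually (\<lambda>n. real n powr (- \<delta>) < q) sequentially"
    using assms(2) by (rule order_tendstoD)
  then have "eventually (\<lambda>n. real n powr (- \<delta>) < q \<and> 0 < n) sequentially"
    by (rule eventually_conj) (rule eventually_gt_at_top)
  then obtain N where "real N powr (- \<delta>) < q" "0 < N" by (auto dest: eventually_happens)
  moreover have "(1 / real N) powr \<delta> = real N powr (- \<delta>)"
    by (simp add: powr_divide powr_minus_divide)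
  ultimately show thesis using that[of N] by simp
qed

lemma abs_diff_le_of_grid_close:
  assumes u: "holder_bound \<delta> u K" and v: "holder_bound \<delta> v K" and "0 < \<delta>" "0 < N"
    and grid: "\<And>j. j \<le> N \<Longrightarrow> \<bar>u (real j / real N) - v (real j / real N)\<bar> \<le> e"
    and t: "t \<in> II"
  shows "\<bar>u t - v t\<bar> \<le> 2 * K * (1 / real N) powr \<delta> + e"
proof -
  define j where "j = nat \<lfloor>t * real N\<rfloor>"
  let ?s = "real j / real N"
  have tN: "0 \<le> t * real N" "t * real N \<le> real N" using t by (simp_all add: mult_left_le_one_le)
  then have j: "real j \<le> t * real N" "t * real N < real j + 1"
    unfolding j_def by (simp, linarith)
  then have jN: "j \<le> N" using tN(2) by simp
  have "?s \<le> t" "t < ?s + 1 / real N"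
    using j \<open>0 < N\<close> by (simp_all add: divide_le_eq pos_less_divide_eq add_divide_distrib[symmetric])
  then have s: "?s \<in> II" "\<bar>t - ?s\<bar> \<le> 1 / real N"
    using jN \<open>0 < N\<close> by auto
  have "\<bar>t - ?s\<bar> powr \<delta> \<le> (1 / real N) powr \<delta>" by (rule powr_mono2) (use assms(3) s in auto)
  then have "K * \<bar>t - ?s\<bar> powr \<delta> \<le> K * (1 / real N) powr \<delta>"
    by (rule mult_left_mono) (rule holder_bound_nonneg[OF u])
  moreover have "\<bar>u t - u ?s\<bar> \<le> K * \<bar>t - ?s\<bar> powr \<delta>" "\<bar>v t - v ?s\<bar> \<le> K * \<bar>t - ?s\<bar> powr \<delta>"
    using u v t s(1) unfolding holder_bound_def by metis+
  ultimately show ?thesis using grid[OF jN] by linarith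
qed

lemma cond_a_finite_representatives:
  assumes "cond_a G" "0 < \<delta>" "0 \<le> K"
  obtains F where "finite F" "F \<subseteq> G"
    "\<And>k. k \<in> G \<Longrightarrow> \<bar>ln (D k 0)\<bar> \<le> K \<Longrightarrow> holder_bound \<delta> (\<lambda>x. ln (D k x)) K
       \<Longrightarrow> \<exists>k'\<in>F. \<forall>t\<in>II. k t = k' t"
proof -
  obtain c where c: "0 < c" and sep: "\<And>g1 g2. g1 \<in> G \<Longrightarrow> g2 \<in> G \<Longrightarrow> \<exists>t\<in>II. g1 t \<noteq> g2 t \<Longrightarrow>
      c \<le> Sup ((\<lambda>t. \<bar>ln (D g1 t) - ln (D g2 t)\<bar>) ` II)"
    using assms(1) unfolding cond_a_def by blast
  define e where "e = c / 4"
  have e: "0 < e" unfolding e_def using c by simp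
  obtain N :: nat where N: "0 < N" "(1 / real N) powr \<delta> \<le> e / (2 * K + 1)"
    using ex_grid_powr_le[OF assms(2), of "e / (2 * K + 1)"] e assms(3) by auto
  have NK: "2 * K * (1 / real N) powr \<delta> \<le> e"
  proof -
    have "2 * K * (1 / real N) powr \<delta> \<le> (2 * K + 1) * (e / (2 * K + 1))"
      using N(2) assms(3) by (intro mult_mono) auto
    then show ?thesis using assms(3) by simp
  qed
  define T where "T = {k \<in> G. \<bar>ln (D k 0)\<bar> \<le> K \<and> holder_bound \<delta> (\<lambda>x. ln (D k x)) K}"
  define R where "R k = map (\<lambda>j. \<lfloor>ln (D k (real j / real N)) / e\<rfloor>) [0..<Suc N]" for k
  have range: "set (R k) \<subseteq> {\<lfloor>- (2 * K) / e\<rfloor>..\<lfloor>2 * K / e\<rfloor>}" if k: "k \<in> T" for k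
  proof
    fix z assume "z \<in> set (R k)"
    then obtain j where j: "j \<le> N" "z = \<lfloor>ln (D k (real j / real N)) / e\<rfloor>"
      unfolding R_def by (auto simp del: upt_Suc simp: less_Suc_eq_le)
    then have "real j / real N \<in> II" using N(1) by (simp add: field_simps)
    then have "\<bar>ln (D k (real j / real N)) - ln (D k 0)\<bar> \<le> K"
      using holder_bound_imp_abs_le[of \<delta> "\<lambda>x. ln (D k x)"] k assms(2) unfolding T_def by blast
    moreover have "\<bar>ln (D k 0)\<bar> \<le> K" using k unfolding T_def by simp
    ultimately have "\<bar>ln (D k (real j / real N))\<bar> \<le> 2 * K" by linarith
    then have "- (2 * K) / e \<le> ln (D k (real j / real N)) / e"
      "ln (D k (real j / real N)) / e \<le> 2 * K / e"
      using e by (intro divide_right_mono; simp add: abs_le_iff)+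
    then show "z \<in> {\<lfloor>- (2 * K) / e\<rfloor>..\<lfloor>2 * K / e\<rfloor>}"
      unfolding j(2) by (auto intro: floor_mono)
  qed
  have "length (R k) = Suc N" for k unfolding R_def by simp
  then have "R ` T \<subseteq> {xs. set xs \<subseteq> {\<lfloor>- (2 * K) / e\<rfloor>..\<lfloor>2 * K / e\<rfloor>} \<and> length xs = Suc N}"
    using range by blast
  then have finR: "finite (R ` T)"
    by (rule finite_subset) (intro finite_lists_length_eq finite_atLeastAtMost_int)
  have agree: "\<forall>t\<in>II. k1 t = k2 t" if k: "k1 \<in> T" "k2 \<in> T" "R k1 = R k2" for k1 k2
  proof (rule ccontr)
    assume "\<not> (\<forall>t\<in>II. k1 t = k2 t)"
    then have "c \<le> Sup ((\<lambda>t. \<bar>ln (D k1 t) - ln (D k2 t)\<bar>) ` II)" using sep k unfolding T_def by blast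
    moreover have "Sup ((\<lambda>t. \<bar>ln (D k1 t) - ln (D k2 t)\<bar>) ` II) \<le> 2 * e"
    proof (rule cSup_least)
      fix y assume "y \<in> (\<lambda>t. \<bar>ln (D k1 t) - ln (D k2 t)\<bar>) ` II"
      then obtain t where t: "t \<in> II" "y = \<bar>ln (D k1 t) - ln (D k2 t)\<bar>" by blast
      have grid: "\<bar>ln (D k1 (real j / real N)) - ln (D k2 (real j / real N))\<bar> \<le> e" if "j \<le> N" for j
      proof -
        have "R k1 ! j = R k2 ! j" using k(3) by simp
        then have "\<lfloor>ln (D k1 (real j / real N)) / e\<rfloor> = \<lfloor>ln (D k2 (real j / real N)) / e\<rfloor>"
          using that unfolding R_def by (simp del: upt_Suc)
        then show ?thesis using e by (intro less_imp_le floor_divide_eq_imp_abs_diff_less)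
      qed
      have "holder_bound \<delta> (\<lambda>x. ln (D k1 x)) K" "holder_bound \<delta> (\<lambda>x. ln (D k2 x)) K"
        using k(1,2) unfolding T_def by auto
      from abs_diff_le_of_grid_close[OF this assms(2) N(1) grid t(1)]
      show "y \<le> 2 * e" using t(2) NK by linarith
    qed simp
    ultimately show False using c unfolding e_def by linarith
  qed
  define rep where "rep q = (SOME k. k \<in> T \<and> R k = q)" for q
  have rep: "rep (R k) \<in> T" "R (rep (R k)) = R k" if "k \<in> T" for k
    using someI[of "\<lambda>k'. k' \<in> T \<and> R k' = R k" k] that unfolding rep_def by auto
  show thesis
  proof (rule that)
    show "finite (rep ` R ` T)" using finR by simp
    show "rep ` R ` T \<subseteq> G" using rep(1) unfolding T_def by blast
    fix k assume "k \<in> G" "\<bar>ln (D k 0)\<bar> \<le> K" "holder_bound \<delta> (\<lambda>x. ln (D k x)) K"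
    then have k: "k \<in> T" unfolding T_def by simp
    have "\<forall>t\<in>II. k t = rep (R k) t" using agree[OF k rep(1)[OF k]] rep(2)[OF k] by simp
    then show "\<exists>k'\<in>rep ` R ` T. \<forall>t\<in>II. k t = k' t" using k by blast
  qed
qed

section \<open>Continuity of r_delta\<close>

lemma p_delta_cong: "(\<And>t. t \<in> II \<Longrightarrow> f t = g t) \<Longrightarrow> p_delta \<delta> f = p_delta \<delta> g"
  unfolding p_delta_def using D_cong[of f g] holder_quots_cong[of "\<lambda>t. ln (D f t)" "\<lambda>t. ln (D g t)"]
  by simp

lemma inv_into_cong_on: "(\<And>x. x \<in> A \<Longrightarrow> f x = g x) \<Longrightarrow> inv_into A f y = inv_into A g y"
  unfolding inv_into_def by (metis (no_types, lifting))

text \<open>G contains inverses only up to agreement on I, which suffices since p_delta only depends on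
  values on I.\<close>
lemma r_delta_eq_Inf_comp:
  assumes G: "subgroup_Diff03 G" and f: "f ` II \<subseteq> II"
  shows "r_delta \<delta> G f = Inf ((\<lambda>k. p_delta \<delta> (\<lambda>x. k (f x))) ` G)"
proof -
  have GD: "G \<subseteq> Diff03" and inv: "\<And>g. g \<in> G \<Longrightarrow> \<exists>k\<in>G. \<forall>t\<in>II. k t = inv_into II g t"
    using G unfolding subgroup_Diff03_def by auto
  have "(\<lambda>h. p_delta \<delta> (inv_into II h \<circ> f)) ` G = (\<lambda>k. p_delta \<delta> (\<lambda>x. k (f x))) ` G"
  proof (intro set_eqI iffI)
    fix y assume "y \<in> (\<lambda>h. p_delta \<delta> (inv_into II h \<circ> f)) ` G"
    then obtain h where h: "h \<in> G" "y = p_delta \<delta> (inv_into II h \<circ> f)" by blast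
    obtain k where k: "k \<in> G" "\<forall>t\<in>II. k t = inv_into II h t" using inv[OF h(1)] by blast
    have "y = p_delta \<delta> (\<lambda>x. k (f x))" unfolding h(2) using k(2) f by (intro p_delta_cong) (auto simp: image_subset_iff)
    then show "y \<in> (\<lambda>k. p_delta \<delta> (\<lambda>x. k (f x))) ` G" using k(1) by blast
  next
    fix y assume "y \<in> (\<lambda>k. p_delta \<delta> (\<lambda>x. k (f x))) ` G"
    then obtain k where k: "k \<in> G" "y = p_delta \<delta> (\<lambda>x. k (f x))" by blast
    obtain h where h: "h \<in> G" "\<forall>t\<in>II. h t = inv_into II k t" using inv[OF k(1)] by blast
    have "bij_betw k II II" using GD k(1) unfolding Diff03_def by auto
    then have "inv_into II h t = k t" if "t \<in> II" for t
      using inv_into_inv_into_eq[of k II II t] inv_into_cong_on[of II h "inv_into II k"] h(2) that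
      by simp
    then have "y = p_delta \<delta> (inv_into II h \<circ> f)" unfolding k(2) using f by (intro p_delta_cong) (auto simp: image_subset_iff)
    then show "y \<in> (\<lambda>h. p_delta \<delta> (inv_into II h \<circ> f)) ` G" using h(1) by blast
  qed
  then show ?thesis unfolding r_delta_def by simp
qed

lemma p_delta_comp_nonneg:
  assumes "regular_map k" "g \<in> Diff1d \<delta>" "0 < \<delta>" "\<delta> \<le> 1"
  shows "0 \<le> p_delta \<delta> (\<lambda>x. k (g x))"
  using holder_const_nonneg[OF bdd_above_holder_quots_ln_D_comp[OF assms]] unfolding p_delta_def by simp

lemma finite_ball_ex_radius:
  fixes N :: "'b \<Rightarrow> real"
  assumes "finite F" "\<And>k. k \<in> F \<Longrightarrow> \<exists>\<eta>>0. \<forall>g\<in>S. N g < \<eta> \<longrightarrow> Q k g"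
  shows "\<exists>\<eta>>0. \<forall>k\<in>F. \<forall>g\<in>S. N g < \<eta> \<longrightarrow> Q k g"
  using assms
proof (induction F rule: finite_induct)
  case empty
  show ?case using zero_less_one by blast
next
  case (insert x F)
  obtain \<eta>1 where "\<eta>1 > 0" "\<forall>k\<in>F. \<forall>g\<in>S. N g < \<eta>1 \<longrightarrow> Q k g" using insert by blast
  moreover obtain \<eta>2 where "\<eta>2 > 0" "\<forall>g\<in>S. N g < \<eta>2 \<longrightarrow> Q x g" using insert(4) by blast
  ultimately show ?case by (intro exI[of _ "min \<eta>1 \<eta>2"]) auto
qed

text \<open>Since ln (D k) \<circ> g = ln (D (k \<circ> g)) - ln (D g), a small p_delta(k \<circ> g) forces a small
  Hoelder norm of ln (D k), the Hoelder constant being distorted by at most (inf D g) powr (-\<delta>).\<close>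
lemma holder_bounds_ln_D_of_comp:
  assumes k: "regular_map k" and g: "g \<in> Diff1d \<delta>" and \<delta>: "0 < \<delta>" "\<delta> \<le> 1"
    and m: "0 < m" "\<And>t. t \<in> II \<Longrightarrow> m \<le> D g t"
  shows "\<bar>ln (D k 0)\<bar> \<le> p_delta \<delta> (\<lambda>x. k (g x)) + p_delta \<delta> g"
    and "holder_bound \<delta> (\<lambda>x. ln (D k x)) ((p_delta \<delta> (\<lambda>x. k (g x)) + p_delta \<delta> g) / m powr \<delta>)"
proof -
  let ?A = "\<lambda>t. ln (D (\<lambda>x. k (g x)) t)" and ?a = "\<lambda>t. ln (D g t)"
  let ?P = "p_delta \<delta> (\<lambda>x. k (g x)) + p_delta \<delta> g"
  have bA: "bdd_above (holder_quots \<delta> ?A)"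
    by (rule bdd_above_holder_quots_ln_D_comp[OF k g \<delta>])
  have ba: "bdd_above (holder_quots \<delta> ?a)"
    using bdd_above_holder_quots_ln_D_comp[OF regular_map_ident g \<delta>] by simp
  have split: "ln (D k (g t)) = ?A t - ?a t" if "t \<in> II" for t
    using ln_D_comp[OF k g that] by simp
  have hP: "holder_const \<delta> ?A + holder_const \<delta> ?a \<le> ?P"
    unfolding p_delta_eq_holder_norm holder_norm_def by simp
  show "\<bar>ln (D k 0)\<bar> \<le> ?P"
    using split[of 0] Diff1dD(2)[OF g] holder_const_nonneg[OF bA] holder_const_nonneg[OF ba]
    unfolding p_delta_eq_holder_norm holder_norm_def by simp
  show "holder_bound \<delta> (\<lambda>x. ln (D k x)) (?P / m powr \<delta>)"
    unfolding holder_bound_def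
  proof (intro ballI)
    fix x1 x2 :: real assume "x1 \<in> II" "x2 \<in> II"
    then obtain s1 s2 where s: "s1 \<in> II" "s2 \<in> II" "g s1 = x1" "g s2 = x2"
      using Diff1dD(3)[OF g] by (metis imageE)
    have "holder_bound \<delta> (\<lambda>t. ?A t - ?a t) ?P"
      using holder_bound_diff[OF holder_bound_holder_const[OF bA] holder_bound_holder_const[OF ba]] hP
      by (rule holder_bound_mono)
    then have "\<bar>ln (D k x2) - ln (D k x1)\<bar> \<le> ?P * \<bar>s2 - s1\<bar> powr \<delta>"
      using s split unfolding holder_bound_def by auto
    also have "\<dots> \<le> ?P * (\<bar>x2 - x1\<bar> powr \<delta> / m powr \<delta>)"
    proof (rule mult_left_mono)
      have "m * \<bar>s2 - s1\<bar> \<le> \<bar>x2 - x1\<bar>"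
        using expanding_of_DERIV_ge[OF C1_on_I_has_D[OF Diff1dD(1)[OF g]] m(2)] m(1) s by auto
      then have "(m * \<bar>s2 - s1\<bar>) powr \<delta> \<le> \<bar>x2 - x1\<bar> powr \<delta>"
        using m(1) \<delta>(1) by (intro powr_mono2) auto
      then show "\<bar>s2 - s1\<bar> powr \<delta> \<le> \<bar>x2 - x1\<bar> powr \<delta> / m powr \<delta>"
        using m(1) by (simp add: powr_mult pos_le_divide_eq mult.commute)
      show "0 \<le> ?P" using hP holder_const_nonneg[OF bA] holder_const_nonneg[OF ba] by linarith
    qed
    finally show "\<bar>ln (D k x2) - ln (D k x1)\<bar> \<le> ?P / m powr \<delta> * \<bar>x2 - x1\<bar> powr \<delta>"
      by simp
  qed
qed

lemma subgroup_Diff03_regular_map: "subgroup_Diff03 G \<Longrightarrow> k \<in> G \<Longrightarrow> regular_map k"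
  unfolding subgroup_Diff03_def using regular_map_Diff03 by blast

lemma r_delta_le_p_delta_comp:
  assumes "subgroup_Diff03 G" "g \<in> Diff1d \<delta>" "0 < \<delta>" "\<delta> \<le> 1" "k \<in> G"
  shows "r_delta \<delta> G g \<le> p_delta \<delta> (\<lambda>x. k (g x))"
  unfolding r_delta_eq_Inf_comp[OF assms(1) equalityD1[OF Diff1dD(3)[OF assms(2)]]]
  using assms p_delta_comp_nonneg[OF subgroup_Diff03_regular_map]
  by (intro cInf_lower) (auto simp: bdd_below_def intro!: exI[of _ 0])

lemma r_delta_upper_semicontinuous:
  assumes \<delta>: "0 < \<delta>" "\<delta> \<le> 1" and G: "subgroup_Diff03 G" and f: "f \<in> Diff1d \<delta>" and "0 < \<epsilon>"
  shows "\<exists>\<eta>>0. \<forall>g\<in>Diff1d \<delta>. norm1d \<delta> (\<lambda>t. g t - f t) < \<eta> \<longrightarrow> r_delta \<delta> G g < r_delta \<delta> G f + \<epsilon>"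
proof -
  have "G \<noteq> {}" using G unfolding subgroup_Diff03_def by blast
  moreover have "Inf ((\<lambda>k. p_delta \<delta> (\<lambda>x. k (f x))) ` G) < r_delta \<delta> G f + \<epsilon> / 2"
    using r_delta_eq_Inf_comp[OF G equalityD1[OF Diff1dD(3)[OF f]]] \<open>0 < \<epsilon>\<close> by simp
  ultimately obtain k where k: "k \<in> G" "p_delta \<delta> (\<lambda>x. k (f x)) < r_delta \<delta> G f + \<epsilon> / 2"
    using cInf_lessD[of "(\<lambda>k. p_delta \<delta> (\<lambda>x. k (f x))) ` G"] by blast
  obtain \<eta> where "0 < \<eta>" and \<eta>: "\<And>g. g \<in> Diff1d \<delta> \<Longrightarrow> norm1d \<delta> (\<lambda>t. g t - f t) < \<eta> \<Longrightarrow>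
      \<bar>p_delta \<delta> (\<lambda>x. k (g x)) - p_delta \<delta> (\<lambda>x. k (f x))\<bar> < \<epsilon> / 2"
    using continuous_p_delta_comp[OF \<delta> subgroup_Diff03_regular_map[OF G k(1)] f, of "\<epsilon> / 2"]
      \<open>0 < \<epsilon>\<close> by auto
  show ?thesis
  proof (intro exI[of _ \<eta>] conjI ballI impI \<open>0 < \<eta>\<close>)
    fix g assume g: "g \<in> Diff1d \<delta>" and close: "norm1d \<delta> (\<lambda>t. g t - f t) < \<eta>"
    show "r_delta \<delta> G g < r_delta \<delta> G f + \<epsilon>"
      using r_delta_le_p_delta_comp[OF G g \<delta> k(1)] \<eta>[OF g close] k(2) by linarith
  qed
qed

lemma r_delta_lower_semicontinuous:
  assumes \<delta>: "0 < \<delta>" "\<delta> \<le> 1" and G: "subgroup_Diff03 G" "cond_a G"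
    and f: "f \<in> Diff1d \<delta>" and "0 < \<epsilon>"
  shows "\<exists>\<eta>>0. \<forall>g\<in>Diff1d \<delta>. norm1d \<delta> (\<lambda>t. g t - f t) < \<eta> \<longrightarrow> r_delta \<delta> G f < r_delta \<delta> G g + \<epsilon>"
proof -
  define R where "R = r_delta \<delta> G f"
  have G_ne: "G \<noteq> {}" using G unfolding subgroup_Diff03_def by blast
  have R0: "0 \<le> R"
    unfolding R_def r_delta_eq_Inf_comp[OF G(1) equalityD1[OF Diff1dD(3)[OF f]]] using G_ne
    by (intro cInf_greatest) (auto intro: p_delta_comp_nonneg[OF subgroup_Diff03_regular_map[OF G(1)] f \<delta>])
  have pf0: "0 \<le> p_delta \<delta> f"
    using p_delta_comp_nonneg[OF regular_map_ident f \<delta>] by simp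
  obtain \<eta>1 where "0 < \<eta>1" and \<eta>1: "\<And>g. g \<in> Diff1d \<delta> \<Longrightarrow> norm1d \<delta> (\<lambda>t. g t - f t) < \<eta>1 \<Longrightarrow>
      \<bar>p_delta \<delta> g - p_delta \<delta> f\<bar> < 1"
    using continuous_p_delta[OF \<delta>] f unfolding cont_1d_def by (meson zero_less_one)
  obtain m where m: "0 < m" "\<And>t. t \<in> II \<Longrightarrow> m \<le> D f t"
    using continuous_on_II_attains_pos_min[OF C1_on_I_continuous_D[OF Diff1dD(1)[OF f]] Diff1dD(5)[OF f]]
    by blast
  define \<mu> where "\<mu> = min 1 ((m / 2) powr \<delta>)"
  have \<mu>: "0 < \<mu>" "\<mu> \<le> 1" "\<mu> \<le> (m / 2) powr \<delta>" unfolding \<mu>_def using m(1) by auto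
  define K where "K = (R + p_delta \<delta> f + 2) / \<mu>"
  have K: "0 \<le> K" "K * \<mu> = R + p_delta \<delta> f + 2" unfolding K_def using R0 pf0 \<mu> by auto
  obtain F where F: "finite F" "F \<subseteq> G" and rep: "\<And>k. k \<in> G \<Longrightarrow> \<bar>ln (D k 0)\<bar> \<le> K \<Longrightarrow>
      holder_bound \<delta> (\<lambda>x. ln (D k x)) K \<Longrightarrow> \<exists>k'\<in>F. \<forall>t\<in>II. k t = k' t"
    using cond_a_finite_representatives[OF G(2) \<delta>(1) K(1)] by blast
  have "\<exists>\<eta>>0. \<forall>k\<in>F. \<forall>g\<in>Diff1d \<delta>. norm1d \<delta> (\<lambda>t. g t - f t) < \<eta> \<longrightarrow>
      \<bar>p_delta \<delta> (\<lambda>x. k (g x)) - p_delta \<delta> (\<lambda>x. k (f x))\<bar> < \<epsilon> / 2"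
  proof (rule finite_ball_ex_radius[OF F(1), where S = "Diff1d \<delta>"
        and N = "\<lambda>g. norm1d \<delta> (\<lambda>t. g t - f t)"
        and Q = "\<lambda>k g. \<bar>p_delta \<delta> (\<lambda>x. k (g x)) - p_delta \<delta> (\<lambda>x. k (f x))\<bar> < \<epsilon> / 2"])
    fix k assume "k \<in> F"
    then have "regular_map k" using F(2) subgroup_Diff03_regular_map[OF G(1)] by blast
    then show "\<exists>\<eta>>0. \<forall>g\<in>Diff1d \<delta>. norm1d \<delta> (\<lambda>t. g t - f t) < \<eta> \<longrightarrow>
        \<bar>p_delta \<delta> (\<lambda>x. k (g x)) - p_delta \<delta> (\<lambda>x. k (f x))\<bar> < \<epsilon> / 2"
      using continuous_p_delta_comp[OF \<delta> _ f half_gt_zero[OF \<open>0 < \<epsilon>\<close>]] by blast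
  qed
  then obtain \<eta>2 where "0 < \<eta>2" and \<eta>2: "\<forall>k\<in>F. \<forall>g\<in>Diff1d \<delta>. norm1d \<delta> (\<lambda>t. g t - f t) < \<eta>2 \<longrightarrow>
      \<bar>p_delta \<delta> (\<lambda>x. k (g x)) - p_delta \<delta> (\<lambda>x. k (f x))\<bar> < \<epsilon> / 2"
    by blast
  define \<eta> where "\<eta> = min \<eta>1 (min (m / 2) \<eta>2)"
  show ?thesis
  proof (intro exI[of _ \<eta>] conjI ballI impI)
    show "0 < \<eta>" unfolding \<eta>_def using \<open>0 < \<eta>1\<close> \<open>0 < \<eta>2\<close> m(1) by simp
    fix g assume g: "g \<in> Diff1d \<delta>" and close: "norm1d \<delta> (\<lambda>t. g t - f t) < \<eta>"
    have Dg: "m / 2 \<le> D g t" if "t \<in> II" for t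
    proof -
      have "\<bar>D g t - D f t\<bar> < m / 2"
        using Diff1d_close_D(1)[OF f g \<delta>(1), of "m / 2" t] close that unfolding \<eta>_def by simp
      then show ?thesis using m(2)[OF that] by linarith
    qed
    have pg: "p_delta \<delta> g < p_delta \<delta> f + 1" using \<eta>1[OF g] close unfolding \<eta>_def by simp
    have "R - \<epsilon> / 2 \<le> p_delta \<delta> (\<lambda>x. k (g x))" if k: "k \<in> G" for k
    proof (cases "R + 1 \<le> p_delta \<delta> (\<lambda>x. k (g x))")
      case False
      let ?Q = "p_delta \<delta> (\<lambda>x. k (g x)) + p_delta \<delta> g"
      have Q: "?Q \<le> K * \<mu>" using False pg K(2) by linarith
      note bounds = holder_bounds_ln_D_of_comp[OF subgroup_Diff03_regular_map[OF G(1) k] g \<delta>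
          half_gt_zero[OF m(1)] Dg]
      have "?Q / (m / 2) powr \<delta> \<le> K * \<mu> / \<mu>"
        using Q \<mu> K(1) m(1) by (intro frac_le) auto
      then have "holder_bound \<delta> (\<lambda>x. ln (D k x)) K"
        using holder_bound_mono[OF bounds(2)] \<mu>(1) by simp
      moreover have "\<bar>ln (D k 0)\<bar> \<le> K"
        using bounds(1) Q mult_left_le[OF \<mu>(2) K(1)] by linarith
      ultimately obtain k' where k': "k' \<in> F" "\<forall>t\<in>II. k t = k' t" using rep[OF k] by blast
      have "p_delta \<delta> (\<lambda>x. k (g x)) = p_delta \<delta> (\<lambda>x. k' (g x))"
        using k'(2) Diff1dD(4)[OF g] by (intro p_delta_cong) simp
      moreover have "\<bar>p_delta \<delta> (\<lambda>x. k' (g x)) - p_delta \<delta> (\<lambda>x. k' (f x))\<bar> < \<epsilon> / 2"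
        using \<eta>2 k'(1) g close unfolding \<eta>_def by simp
      moreover have "R \<le> p_delta \<delta> (\<lambda>x. k' (f x))"
        unfolding R_def using r_delta_le_p_delta_comp[OF G(1) f \<delta>] k'(1) F(2) by blast
      ultimately show ?thesis by linarith
    qed (use \<open>0 < \<epsilon>\<close> in linarith)
    then have "R - \<epsilon> / 2 \<le> r_delta \<delta> G g"
      unfolding r_delta_eq_Inf_comp[OF G(1) equalityD1[OF Diff1dD(3)[OF g]]] using G_ne by (intro cInf_greatest) auto
    then show "r_delta \<delta> G f < r_delta \<delta> G g + \<epsilon>" using \<open>0 < \<epsilon>\<close> unfolding R_def by linarith
  qed
qed

lemma continuous_r_delta:
  assumes "0 < \<delta>" "\<delta> \<le> 1" "subgroup_Diff03 G" "cond_a G"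
  shows "cont_1d \<delta> (r_delta \<delta> G)"
  unfolding cont_1d_def
proof (intro ballI allI impI)
  fix f and \<epsilon> :: real assume f: "f \<in> Diff1d \<delta>" and "0 < \<epsilon>"
  obtain \<eta>1 where "0 < \<eta>1" "\<forall>g\<in>Diff1d \<delta>. norm1d \<delta> (\<lambda>t. g t - f t) < \<eta>1 \<longrightarrow> r_delta \<delta> G g < r_delta \<delta> G f + \<epsilon>"
    using r_delta_upper_semicontinuous[OF assms(1-3) f \<open>0 < \<epsilon>\<close>] by blast
  moreover obtain \<eta>2 where "0 < \<eta>2" "\<forall>g\<in>Diff1d \<delta>. norm1d \<delta> (\<lambda>t. g t - f t) < \<eta>2 \<longrightarrow> r_delta \<delta> G f < r_delta \<delta> G g + \<epsilon>"
    using r_delta_lower_semicontinuous[OF assms f \<open>0 < \<epsilon>\<close>] by blast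
  ultimately show "\<exists>\<eta>>0. \<forall>g\<in>Diff1d \<delta>. norm1d \<delta> (\<lambda>t. g t - f t) < \<eta> \<longrightarrow> \<bar>r_delta \<delta> G g - r_delta \<delta> G f\<bar> < \<epsilon>"
    by (intro exI[of _ "min \<eta>1 \<eta>2"]) (auto simp: abs_less_iff)
qed

theorem mainTheorem16:
  fixes \<delta> :: real and G :: "(real \<Rightarrow> real) set"
  assumes "0 < \<delta>" and "\<delta> < 1/2"
    and "subgroup_Diff03 G"
    and "cond_a G"
  shows "cont_1d \<delta> (p_delta \<delta>) \<and> cont_1d \<delta> (r_delta \<delta> G)"
  using continuous_p_delta continuous_r_delta assms by simp

end
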